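(* Let $K_1,K_2$ be non-empty disjoint compact subsets of $\mathbf S^3$. There is $C\ge1$ such that for any $x\in K_1$, $y\in K_2$ and any $w\in\mathcal L_{\mathbb C}$ whose chain $L_w$ passes through $x$ and meets $K_2$, \[C^{-1}d(y,L_w)\le d_E(\pi_x(y),w)\le C\,d(y,L_w).\]
   Context: On $\mathbb{C}^3$: $u\cdot v=\sum u_i\bar v_i$, $\|u\|=\sqrt{u\cdot u}$, $\langle u,v\rangle=u_0\bar v_0-u_1\bar v_1-u_2\bar v_2$, $q(u)=\langle u,u\rangle$, $\|u\wedge v\|^2=\|u\|^2\|v\|^2-|u\cdot v|^2$. On $\mathbb P^2_{\mathbb C}$, $d_E(u,v)=\|u\wedge v\|/(\|u\|\|v\|)$. $\mathbf S^3=\{u:q(u)=0\}$ with visual metric $d(u,v)=\sqrt{|\langle u,v\rangle|/(\|u\|\|v\|)}$. $\mathcal L_{\mathbb C}=\{w:q(w)<0\}$; $w^\perp=\{u:\langle u,w\rangle=0\}$ and $L_w=w^\perp\cap\mathbf S^3$ (a chain). For $x\in\mathbf S^3$ and $y\in\mathbf S^3\setminus\{x\}$, $\pi_x(y)$ is the unique intersection point of the projective lines $x^\perp$ and $y^\perp$. $d(y,L_w)=\inf_{z\in L_w}d(y,z)$. *)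

theory Defs
  imports "HOL-Analysis.Analysis"
begin

text \<open>Points of the complex projective plane are represented by nonzero vectors of C^3;
  all quantities below are invariant under rescaling of representatives.\<close>

definition hdot :: "complex^3 \<Rightarrow> complex^3 \<Rightarrow> complex" where
  "hdot u v = (\<Sum>i\<in>UNIV. u$i * cnj (v$i))"

definition herm :: "complex^3 \<Rightarrow> complex^3 \<Rightarrow> complex" where
  "herm u v = u$0 * cnj (v$0) - u$1 * cnj (v$1) - u$2 * cnj (v$2)"

definition qform :: "complex^3 \<Rightarrow> real" where
  "qform u = Re (herm u u)"

definition wedge_norm :: "complex^3 \<Rightarrow> complex^3 \<Rightarrow> real" where
  "wedge_norm u v = sqrt ((norm u)^2 * (norm v)^2 - (cmod (hdot u v))^2)"

definition dE :: "complex^3 \<Rightarrow> complex^3 \<Rightarrow> real" where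
  "dE u v = wedge_norm u v / (norm u * norm v)"

definition S3 :: "(complex^3) set" where
  "S3 = {u. u \<noteq> 0 \<and> qform u = 0}"

definition dvis :: "complex^3 \<Rightarrow> complex^3 \<Rightarrow> real" where
  "dvis u v = sqrt (cmod (herm u v) / (norm u * norm v))"

definition LC :: "(complex^3) set" where
  "LC = {w. qform w < 0}"

definition chain :: "complex^3 \<Rightarrow> (complex^3) set" where
  "chain w = {u \<in> S3. herm u w = 0}"

definition dist_chain :: "complex^3 \<Rightarrow> complex^3 \<Rightarrow> real" where
  "dist_chain y w = (INF z\<in>chain w. dvis y z)"

definition proj_eq :: "complex^3 \<Rightarrow> complex^3 \<Rightarrow> bool" where
  "proj_eq u v \<longleftrightarrow> (\<exists>c::complex. c \<noteq> 0 \<and> v = c *s u)"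

text \<open>z represents pi_x(y): the intersection point of the projective lines x^perp and y^perp.\<close>
definition is_pi :: "complex^3 \<Rightarrow> complex^3 \<Rightarrow> complex^3 \<Rightarrow> bool" where
  "is_pi x y z \<longleftrightarrow> z \<noteq> 0 \<and> herm z x = 0 \<and> herm z y = 0"

end

theory Submission
  imports Defs
begin

text \<open>
  Write \<open>herm_ratio u v = |\<langle>u,v\<rangle>| / (\<parallel>u\<parallel> \<parallel>v\<parallel>)\<close>, so that the visual metric is its square
  root, and compare both \<open>d(y, L_w)\<close> and \<open>d_E(\<pi>_x(y), w)\<close> with \<open>h = herm_ratio y w\<close>.
  For \<open>z \<in> L_w\<close> one has \<open>h \<le> d_E(y, z) \<le> \<surd>2 d(y, z)\<close>; conversely, projecting \<open>y\<close> onto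
  \<open>w\<^sup>\<perp>\<close> and returning to the null cone along \<open>x\<close> gives a point of \<open>L_w\<close> at visual distance
  at most \<open>h / \<surd>(2 herm_ratio w w herm_ratio x y)\<close>. Since \<open>\<pi>_x(y) \<perp> y\<close>, also
  \<open>h \<le> d_E(\<pi>_x(y), w)\<close>, and writing \<open>\<pi>_x(y) = a w + c x\<close> gives
  \<open>d_E(\<pi>_x(y), w) \<le> h / herm_ratio x y\<close>. Compactness and disjointness bound \<open>herm_ratio x y\<close>
  from below on \<open>K\<^sub>1 \<times> K\<^sub>2\<close>, and \<open>herm_ratio w w\<close> from below for chains meeting both sets: a null
  \<open>w\<close> orthogonal to \<open>x\<close> and \<open>k\<close> would be projectively equal to both.
\<close>

section \<open>Hermitian algebra in coordinates\<close>

lemma sum_UNIV_3: "sum f (UNIV::3 set) = f 0 + f 1 + f 2"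
proof -
  have three: "(3::3) = 0" by simp
  show ?thesis using sum_3[of f, unfolded three] by (simp add: ac_simps)
qed

lemma vec3_eq_iff: "(u::'a^3) = v \<longleftrightarrow> u$0 = v$0 \<and> u$1 = v$1 \<and> u$2 = v$2"
proof -
  have three: "(3::3) = 0" by simp
  show ?thesis by (metis (full_types) exhaust_3 vec_eq_iff three)
qed

lemma norm_vec3_sq: "(norm (u::complex^3))^2 = (cmod (u$0))^2 + (cmod (u$1))^2 + (cmod (u$2))^2"
  by (simp add: norm_vec_def L2_set_def sum_UNIV_3)

lemma hdot_expand: "hdot u v = u$0 * cnj (v$0) + u$1 * cnj (v$1) + u$2 * cnj (v$2)"
  by (simp add: hdot_def sum_UNIV_3)

lemma qform_expand: "qform u = (cmod (u$0))^2 - (cmod (u$1))^2 - (cmod (u$2))^2"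
proof -
  have "herm u u = complex_of_real ((cmod (u$0))^2 - (cmod (u$1))^2 - (cmod (u$2))^2)"
    unfolding herm_def of_real_diff complex_norm_square by simp
  then show ?thesis unfolding qform_def by simp
qed

lemma herm_self: "herm u u = complex_of_real (qform u)"
  unfolding qform_expand herm_def of_real_diff complex_norm_square by simp

lemma hdot_self: "hdot u u = complex_of_real ((norm u)^2)"
  unfolding norm_vec3_sq hdot_expand of_real_add complex_norm_square by simp

lemma herm_scaleL [simp]: "herm (c *s u) v = c * herm u v"
  and herm_scaleR [simp]: "herm u (c *s v) = cnj c * herm u v"
  and herm_addL [simp]: "herm (u + u') v = herm u v + herm u' v"
  and herm_addR [simp]: "herm u (v + v') = herm u v + herm u v'"
  and herm_diffL [simp]: "herm (u - u') v = herm u v - herm u' v"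
  and herm_diffR [simp]: "herm u (v - v') = herm u v - herm u v'"
  and herm_zeroL [simp]: "herm 0 v = 0"
  and herm_zeroR [simp]: "herm u 0 = 0"
  by (simp_all add: herm_def algebra_simps)

lemma hdot_scaleL [simp]: "hdot (c *s u) v = c * hdot u v"
  and hdot_scaleR [simp]: "hdot u (c *s v) = cnj c * hdot u v"
  and hdot_addL [simp]: "hdot (u + u') v = hdot u v + hdot u' v"
  and hdot_addR [simp]: "hdot u (v + v') = hdot u v + hdot u v'"
  and hdot_diffL [simp]: "hdot (u - u') v = hdot u v - hdot u' v"
  and hdot_diffR [simp]: "hdot u (v - v') = hdot u v - hdot u v'"
  by (simp_all add: hdot_expand algebra_simps)

lemma herm_commute: "herm v u = cnj (herm u v)"
  by (simp add: herm_def)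

lemma hdot_commute: "hdot v u = cnj (hdot u v)"
  by (simp add: hdot_expand)

lemma norm_scale_vec3: "norm (c *s (u::complex^3)) = cmod c * norm u"
proof -
  have "(norm (c *s u))^2 = (cmod c * norm u)^2"
    by (simp add: norm_vec3_sq norm_mult power_mult_distrib algebra_simps)
  then show ?thesis by (simp add: power2_eq_iff_nonneg)
qed

lemma qform_scale: "qform (c *s u) = (cmod c)^2 * qform u"
  by (simp add: qform_expand norm_mult power_mult_distrib algebra_simps)

lemma lagrange_identity_2:
  "((cmod a1)^2 + (cmod a2)^2) * ((cmod b1)^2 + (cmod b2)^2) =
   (cmod (a1 * cnj b1 + a2 * cnj b2))^2 + (cmod (a1 * b2 - a2 * b1))^2"
proof -
  have "complex_of_real (((cmod a1)^2 + (cmod a2)^2) * ((cmod b1)^2 + (cmod b2)^2)) =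
     complex_of_real ((cmod (a1 * cnj b1 + a2 * cnj b2))^2 + (cmod (a1 * b2 - a2 * b1))^2)"
    unfolding of_real_mult of_real_add complex_norm_square by (simp add: algebra_simps)
  then show ?thesis using of_real_eq_iff by blast
qed

lemma lagrange_identity_3:
  "(norm u)^2 * (norm v)^2 - (cmod (hdot u v))^2 =
   (cmod (u$0 * v$1 - u$1 * v$0))^2 + (cmod (u$0 * v$2 - u$2 * v$0))^2 + (cmod (u$1 * v$2 - u$2 * v$1))^2"
proof -
  have "complex_of_real ((norm u)^2 * (norm v)^2 - (cmod (hdot u v))^2) =
     complex_of_real ((cmod (u$0 * v$1 - u$1 * v$0))^2 + (cmod (u$0 * v$2 - u$2 * v$0))^2
       + (cmod (u$1 * v$2 - u$2 * v$1))^2)"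
    unfolding of_real_diff of_real_mult of_real_add norm_vec3_sq complex_norm_square hdot_expand
    by (simp add: algebra_simps)
  then show ?thesis using of_real_eq_iff by blast
qed

lemma cmod_hdot_sq_le: "(cmod (hdot u v))^2 \<le> (norm u)^2 * (norm v)^2"
proof -
  have "0 \<le> (cmod (u$0 * v$1 - u$1 * v$0))^2 + (cmod (u$0 * v$2 - u$2 * v$0))^2
      + (cmod (u$1 * v$2 - u$2 * v$1))^2"
    by simp
  then show ?thesis using lagrange_identity_3[of u v] by linarith
qed

lemma cmod_hdot_le: "cmod (hdot u v) \<le> norm u * norm v"
proof -
  have "(cmod (hdot u v))^2 \<le> (norm u * norm v)^2"
    using cmod_hdot_sq_le[of u v] by (simp add: power_mult_distrib)
  then show ?thesis by (rule power2_le_imp_le) simp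
qed

lemma cmod_herm_le: "cmod (herm u v) \<le> norm u * norm v"
proof -
  define Jv where "Jv = (\<chi> i. if i = 0 then v$i else - v$i)"
  have "herm u v = hdot u Jv" by (simp add: herm_def hdot_expand Jv_def)
  moreover have "(norm Jv)^2 = (norm v)^2" by (simp add: norm_vec3_sq Jv_def)
  then have "norm Jv = norm v" by (simp add: power2_eq_iff_nonneg)
  ultimately show ?thesis using cmod_hdot_le[of u Jv] by simp
qed

lemma wedge_norm_sq: "(wedge_norm u v)^2 = (norm u)^2 * (norm v)^2 - (cmod (hdot u v))^2"
  unfolding wedge_norm_def using cmod_hdot_sq_le[of u v] by simp

lemma wedge_norm_nonneg: "0 \<le> wedge_norm u v"
  using cmod_hdot_sq_le[of u v] by (simp add: wedge_norm_def)

lemma wedge_norm_commute: "wedge_norm v u = wedge_norm u v"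
  by (simp add: wedge_norm_def hdot_commute[of v u] mult.commute)

lemma wedge_norm_le: "wedge_norm u v \<le> norm u * norm v"
proof -
  have "(wedge_norm u v)^2 \<le> (norm u * norm v)^2"
    by (simp add: wedge_norm_sq power_mult_distrib)
  then show ?thesis by (rule power2_le_imp_le) simp
qed

lemma of_real_wedge_norm_sq:
  "complex_of_real ((wedge_norm u v)^2) = hdot u u * hdot v v - hdot u v * hdot v u"
  unfolding wedge_norm_sq of_real_diff of_real_mult hdot_self[symmetric] complex_norm_square
  by (simp add: hdot_commute[of v u])

lemma wedge_norm_add_scale: "wedge_norm (a *s u + b *s v) u = cmod b * wedge_norm v u"
proof -
  have "complex_of_real ((wedge_norm (a *s u + b *s v) u)^2) =
      complex_of_real ((cmod b * wedge_norm v u)^2)"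
    unfolding power_mult_distrib of_real_mult of_real_wedge_norm_sq complex_norm_square
    by (simp add: algebra_simps)
  then have "(wedge_norm (a *s u + b *s v) u)^2 = (cmod b * wedge_norm v u)^2"
    using of_real_eq_iff by blast
  then show ?thesis using wedge_norm_nonneg by (simp add: power2_eq_iff_nonneg)
qed

lemma norm_sub_proj:
  assumes "v \<noteq> 0"
  shows "norm (u - (hdot u v / complex_of_real ((norm v)^2)) *s v) = wedge_norm u v / norm v"
proof -
  define N where "N = complex_of_real ((norm v)^2)"
  define l where "l = hdot u v / N"
  have N0: "N \<noteq> 0" using assms by (simp add: N_def)
  have "complex_of_real ((norm (u - l *s v))^2) = hdot (u - l *s v) (u - l *s v)"
    by (simp add: hdot_self)
  also have "\<dots> = hdot u u - cnj l * hdot u v - l * cnj (hdot u v) + l * cnj l * N"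
    by (simp add: algebra_simps N_def hdot_self[of v] hdot_commute[of v u])
  also have "\<dots> = (hdot u u * N - hdot u v * cnj (hdot u v)) / N"
    using N0 by (simp add: l_def N_def field_simps)
  also have "\<dots> = complex_of_real ((wedge_norm u v / norm v)^2)"
    unfolding power_divide of_real_divide of_real_wedge_norm_sq
    by (simp add: N_def hdot_self[of v] hdot_commute[of v u])
  finally have "(norm (u - l *s v))^2 = (wedge_norm u v / norm v)^2"
    using of_real_eq_iff by blast
  then show ?thesis
    using wedge_norm_nonneg[of u v] by (simp add: l_def N_def power2_eq_iff_nonneg)
qed

lemma cmod_herm_le_wedge_norm:
  assumes "v \<noteq> 0" and "herm v a = 0"
  shows "cmod (herm u a) \<le> wedge_norm u v / norm v * norm a"
proof -
  define l where "l = hdot u v / complex_of_real ((norm v)^2)"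
  have "herm (u - l *s v) a = herm u a" using assms(2) by simp
  then have "cmod (herm u a) \<le> norm (u - l *s v) * norm a"
    by (metis cmod_herm_le)
  then show ?thesis using norm_sub_proj[OF assms(1), of u] by (simp add: l_def)
qed

lemma dE_commute: "dE v u = dE u v"
  by (simp add: dE_def wedge_norm_commute mult.commute)

definition herm_ratio :: "complex^3 \<Rightarrow> complex^3 \<Rightarrow> real" where
  "herm_ratio u v = cmod (herm u v) / (norm u * norm v)"

lemma herm_ratio_commute: "herm_ratio v u = herm_ratio u v"
  by (simp add: herm_ratio_def herm_commute[of v u] mult.commute)

lemma herm_ratio_nonneg: "0 \<le> herm_ratio u v"
  by (simp add: herm_ratio_def)

lemma herm_ratio_le_1: "herm_ratio u v \<le> 1"
  using cmod_herm_le[of u v] by (cases "u = 0 \<or> v = 0") (auto simp: herm_ratio_def divide_le_eq_1)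

lemma herm_ratio_scale_self: "c \<noteq> 0 \<Longrightarrow> herm_ratio (c *s u) (c *s u) = herm_ratio u u"
  by (simp add: herm_ratio_def norm_scale_vec3 norm_mult power2_eq_square)

lemma herm_ratio_pos_iff: "0 < herm_ratio u v \<longleftrightarrow> herm u v \<noteq> 0"
  by (cases "u = 0 \<or> v = 0") (auto simp: herm_ratio_def)

lemma herm_ratio_le_dE:
  assumes "v \<noteq> 0" and "herm v a = 0"
  shows "herm_ratio u a \<le> dE u v"
proof (cases "u = 0 \<or> a = 0")
  case True
  then show ?thesis using wedge_norm_nonneg[of u v] by (auto simp: herm_ratio_def dE_def)
next
  case False
  then have "norm u > 0" "norm a > 0" "norm v > 0" using assms(1) by auto
  then show ?thesis
    using cmod_herm_le_wedge_norm[OF assms, of u]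
    by (simp add: herm_ratio_def dE_def field_simps)
qed

section \<open>Null vectors\<close>

lemma qform_zero_coord0_imp_zero:
  assumes "qform v = 0" and "v$0 = 0"
  shows "v = 0"
proof -
  have "qform v = - ((cmod (v$1))^2 + (cmod (v$2))^2)" using assms(2) by (simp add: qform_expand)
  then have "(cmod (v$1))^2 + (cmod (v$2))^2 = 0" using assms(1) by linarith
  then have "cmod (v$1) = 0 \<and> cmod (v$2) = 0" by (simp only: sum_power2_eq_zero_iff)
  then have "v$1 = 0" "v$2 = 0" by simp_all
  then show ?thesis using assms(2) by (simp add: vec3_eq_iff)
qed

lemma S3_coord0_nonzero: "u \<in> S3 \<Longrightarrow> u$0 \<noteq> 0"
  using qform_zero_coord0_imp_zero by (auto simp: S3_def)

lemma S3_coord0_sq: "u \<in> S3 \<Longrightarrow> (cmod (u$0))^2 = (cmod (u$1))^2 + (cmod (u$2))^2"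
  by (simp add: S3_def qform_expand)

lemma S3_herm_self: "u \<in> S3 \<Longrightarrow> herm u u = 0"
  by (simp add: S3_def herm_self)

lemma qform_add_scale_orth_null:
  assumes "herm x x = 0" and "herm m x = 0"
  shows "qform (m + c *s x) = qform m"
proof -
  have "herm (m + c *s x) (m + c *s x) = herm m m"
    using assms herm_commute[of x m] by simp
  then show ?thesis by (simp add: herm_self)
qed

lemma orth_S3_imp_proj_eq:
  assumes x: "x \<in> S3" and y: "y \<in> S3" and "herm y x = 0"
  shows "proj_eq x y"
proof -
  \<comment> \<open>\<open>y - c x\<close> is again null and has vanishing first coordinate.\<close>
  define c where "c = y$0 / x$0"
  have x0: "x$0 \<noteq> 0" and "y$0 \<noteq> 0" using x y by (simp_all add: S3_coord0_nonzero)
  then have "c \<noteq> 0" by (simp add: c_def)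
  have "y + (- c) *s x = y - c *s x" by (simp add: vec_eq_iff)
  then have "qform (y - c *s x) = qform y"
    using qform_add_scale_orth_null[OF S3_herm_self[OF x] assms(3), of "- c"] by simp
  moreover have "(y - c *s x)$0 = 0" using x0 by (simp add: c_def)
  ultimately have "y - c *s x = 0"
    using y by (intro qform_zero_coord0_imp_zero) (simp_all add: S3_def)
  then have "y = c *s x" by simp
  with \<open>c \<noteq> 0\<close> show ?thesis by (auto simp: proj_eq_def)
qed

lemma proj_eq_trans:
  assumes "proj_eq u v" and "proj_eq v w"
  shows "proj_eq u w"
proof -
  obtain a b where "a \<noteq> 0" "v = a *s u" "b \<noteq> 0" "w = b *s v"
    using assms by (auto simp: proj_eq_def)
  then show ?thesis unfolding proj_eq_def by (intro exI[of _ "b * a"]) (simp add: vector_smult_assoc)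
qed

lemma wedge_norm_sq_le_S3:
  assumes y: "y \<in> S3" and z: "z \<in> S3"
  shows "(wedge_norm y z)^2 \<le> 2 * norm y * norm z * cmod (herm y z)"
proof -
  define A where "A = y$0 * cnj (z$0)"
  define B where "B = y$1 * cnj (z$1) + y$2 * cnj (z$2)"
  define r where "r = cmod A"
  have hdot_AB: "hdot y z = A + B" and herm_AB: "herm y z = A - B"
    by (simp_all add: hdot_expand herm_def A_def B_def)
  have "(cmod B)^2 \<le> ((cmod (y$1))^2 + (cmod (y$2))^2) * ((cmod (z$1))^2 + (cmod (z$2))^2)"
    using lagrange_identity_2[of "y$1" "y$2" "z$1" "z$2"] by (simp add: B_def)
  also have "\<dots> = r^2"
    using S3_coord0_sq[OF y] S3_coord0_sq[OF z] by (simp add: r_def A_def norm_mult power_mult_distrib)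
  finally have "cmod B \<le> r" by (rule power2_le_imp_le) (simp add: r_def)
  then have sum_le: "cmod (A + B) \<le> 2 * r"
    using norm_triangle_ineq[of A B] by (simp add: r_def)
  have "2 * r = cmod ((A + B) + (A - B))" by (simp add: r_def norm_mult)
  then have diff_ge: "2 * r - cmod (A + B) \<le> cmod (A - B)"
    using norm_triangle_ineq[of "A + B" "A - B"] by linarith
  have "(norm y * norm z)^2 = (2 * r)^2"
    using S3_coord0_sq[OF y] S3_coord0_sq[OF z]
    by (simp add: norm_vec3_sq r_def A_def norm_mult power_mult_distrib algebra_simps)
  then have norms: "norm y * norm z = 2 * r" by (rule power2_eq_imp_eq) (simp_all add: r_def)
  have "(wedge_norm y z)^2 = (norm y * norm z)^2 - (cmod (A + B))^2"
    by (simp add: wedge_norm_sq hdot_AB power_mult_distrib)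
  also have "\<dots> = (2 * r - cmod (A + B)) * (2 * r + cmod (A + B))"
    by (simp add: norms power2_eq_square algebra_simps)
  also have "\<dots> \<le> cmod (A - B) * (4 * r)"
    using diff_ge sum_le by (intro mult_mono) (auto simp: r_def)
  also have "\<dots> = 2 * norm y * norm z * cmod (herm y z)"
    by (simp add: herm_AB mult.assoc norms)
  finally show ?thesis .
qed

lemma dE_le_sqrt2_dvis:
  assumes y: "y \<in> S3" and z: "z \<in> S3"
  shows "dE y z \<le> sqrt 2 * dvis y z"
proof -
  have "norm y > 0" "norm z > 0" using y z by (auto simp: S3_def)
  then have "(dE y z)^2 \<le> 2 * (dvis y z)^2"
    using wedge_norm_sq_le_S3[OF y z]
    by (simp add: dE_def dvis_def power_divide field_simps power2_eq_square)
  then have "(dE y z)^2 \<le> (sqrt 2 * dvis y z)^2"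
    by (simp add: power_mult_distrib)
  then show ?thesis by (rule power2_le_imp_le) (simp add: dvis_def)
qed

section \<open>Vectors orthogonal to two independent vectors\<close>

definition bdot :: "complex^3 \<Rightarrow> complex^3 \<Rightarrow> complex" where
  "bdot u v = u$0 * v$0 + u$1 * v$1 + u$2 * v$2"

definition cross :: "complex^3 \<Rightarrow> complex^3 \<Rightarrow> complex^3" where
  "cross a b = (\<chi> i. if i = 0 then a$1 * b$2 - a$2 * b$1
                     else if i = 1 then a$2 * b$0 - a$0 * b$2
                     else a$0 * b$1 - a$1 * b$0)"

lemma cross_nth: "cross a b $ 0 = a$1 * b$2 - a$2 * b$1"
  "cross a b $ 1 = a$2 * b$0 - a$0 * b$2" "cross a b $ 2 = a$0 * b$1 - a$1 * b$0"
  by (simp_all add: cross_def)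

lemma cross_commute: "cross b a = - cross a b"
  by (simp add: vec3_eq_iff cross_nth)

lemma cross_cross: "cross u (cross a b) = bdot u b *s a - bdot u a *s b"
  by (simp add: vec3_eq_iff cross_nth bdot_def algebra_simps)

lemma cross_eq_0_imp_scale:
  assumes "cross u n = 0" and "n \<noteq> 0"
  shows "\<exists>c. u = c *s n"
proof -
  have m: "u$0*n$1 = u$1*n$0" "u$0*n$2 = u$2*n$0" "u$1*n$2 = u$2*n$1"
    using assms(1) by (simp_all add: vec3_eq_iff cross_nth)
  define N where "N = hdot n n"
  have "N \<noteq> 0" using assms(2) by (simp add: N_def hdot_self)
  have "u$0 * N - hdot u n * n$0 = cnj (n$1) * (u$0*n$1 - u$1*n$0) + cnj (n$2) * (u$0*n$2 - u$2*n$0)"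
    "u$1 * N - hdot u n * n$1 = cnj (n$0) * (u$1*n$0 - u$0*n$1) + cnj (n$2) * (u$1*n$2 - u$2*n$1)"
    "u$2 * N - hdot u n * n$2 = cnj (n$0) * (u$2*n$0 - u$0*n$2) + cnj (n$1) * (u$2*n$1 - u$1*n$2)"
    by (simp_all add: N_def hdot_expand algebra_simps)
  then have "u$i * N = hdot u n * n$i" if "i \<in> {0, 1, 2}" for i
    using m that by auto
  then have "u = (hdot u n / N) *s n"
    using \<open>N \<noteq> 0\<close> by (simp add: vec3_eq_iff field_simps)
  then show ?thesis by blast
qed

lemma herm_orth_pair_proportional:
  assumes a: "a \<noteq> 0" and ab: "\<forall>c. b \<noteq> c *s a"
    and u: "herm u a = 0" "herm u b = 0" and v: "herm v a = 0" "herm v b = 0" "v \<noteq> 0"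
  shows "\<exists>c. u = c *s v"
proof -
  \<comment> \<open>Since \<open>herm x y = bdot x (J y)\<close>, both \<open>u\<close> and \<open>v\<close> are parallel to \<open>cross (J a) (J b)\<close>.\<close>
  define J :: "complex^3 \<Rightarrow> complex^3" where "J x = (\<chi> i. if i = 0 then cnj (x$i) else - cnj (x$i))" for x
  have herm_J: "herm x y = bdot x (J y)" for x y
    by (simp add: herm_def bdot_def J_def)
  define n where "n = cross (J a) (J b)"
  have "n \<noteq> 0"
  proof
    assume "n = 0"
    then have "cross (J b) (J a) = 0" by (simp add: n_def cross_commute[of "J a"])
    moreover have "J a \<noteq> 0" using a by (auto simp: J_def vec3_eq_iff)
    ultimately obtain c where "J b = c *s J a" using cross_eq_0_imp_scale by blast
    then have "b = cnj c *s a"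
      by (simp add: J_def vec3_eq_iff) (metis complex_cnj_cnj complex_cnj_mult)
    with ab show False by blast
  qed
  have "cross u n = 0" "cross v n = 0"
    using u v by (simp_all add: n_def cross_cross herm_J[symmetric])
  then obtain cu cv where "u = cu *s n" "v = cv *s n"
    using cross_eq_0_imp_scale \<open>n \<noteq> 0\<close> by metis
  moreover have "cv \<noteq> 0" using \<open>v \<noteq> 0\<close> calculation by auto
  ultimately have "u = (cu / cv) *s v" by (simp add: vector_smult_assoc)
  then show ?thesis by blast
qed

section \<open>Comparison of the chain distance and of \<open>d_E\<close> with \<open>herm_ratio y w\<close>\<close>

lemma orth_null_in_span:
  assumes x: "x \<in> S3" and wx: "herm w x = 0" and qw: "qform w < 0" and px: "herm p x = 0"
  shows "\<exists>a c. p = a *s w + c *s x"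
proof -
  define a where "a = herm p w / herm w w"
  have "herm w w \<noteq> 0" using qw by (simp add: herm_self)
  then have "herm (p - a *s w) w = 0" by (simp add: a_def)
  moreover have "herm (p - a *s w) x = 0" using px wx by simp
  moreover have "\<forall>c. w \<noteq> c *s x" using qw x by (auto simp: qform_scale S3_def)
  moreover have "herm x w = 0" using wx herm_commute[of x w] by simp
  ultimately obtain c where "p - a *s w = c *s x"
    using herm_orth_pair_proportional[of x w "p - a *s w" x] x S3_herm_self[OF x]
    by (auto simp: S3_def)
  then have "p = a *s w + c *s x" by (simp add: diff_eq_eq add.commute)
  then show ?thesis by blast
qed

lemma herm_ratio_le_dE_pi: "is_pi x y p \<Longrightarrow> herm_ratio y w \<le> dE p w"
  using herm_ratio_le_dE[of p y w] by (simp add: is_pi_def herm_ratio_commute dE_commute)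

lemma dE_pi_le:
  assumes x: "x \<in> S3" and wx: "herm w x = 0" and qw: "qform w < 0"
    and pi: "is_pi x y p" and xy: "herm x y \<noteq> 0"
  shows "dE p w \<le> herm_ratio y w / herm_ratio x y"
proof -
  have p0: "p \<noteq> 0" and px: "herm p x = 0" and py: "herm p y = 0"
    using pi by (auto simp: is_pi_def)
  obtain a c where p: "p = a *s w + c *s x" using orth_null_in_span[OF x wx qw px] by blast
  have "c * herm x y = - (a * herm w y)" using py by (simp add: p eq_neg_iff_add_eq_0 add.commute)
  then have ac: "cmod c * cmod (herm x y) = cmod a * cmod (herm y w)"
    by (metis complex_mod_cnj herm_commute norm_minus_cancel norm_mult)
  have "a \<noteq> 0"
  proof
    assume "a = 0"
    then have "c = 0" using ac xy by simp
    then show False using p0 p \<open>a = 0\<close> by simp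
  qed
  have "wedge_norm p w = cmod c * wedge_norm x w" unfolding p by (rule wedge_norm_add_scale)
  then have dE_p: "dE p w * (norm p * norm w) = cmod c * wedge_norm x w"
    using p0 qw by (auto simp: dE_def qform_expand)
  have "wedge_norm p x = cmod a * wedge_norm x w"
    unfolding p add.commute[of "a *s w"] wedge_norm_add_scale by (simp add: wedge_norm_commute)
  then have a_wedge: "cmod a * wedge_norm x w \<le> norm p * norm x"
    using wedge_norm_le[of p x] by simp
  have "cmod a * (dE p w * (norm p * norm w)) \<le> cmod c * (norm p * norm x)"
    unfolding dE_p using mult_left_mono[OF a_wedge, of "cmod c"] by (simp add: algebra_simps)
  then have "cmod a * (dE p w * norm w) \<le> cmod c * norm x"
    using p0 by (simp add: algebra_simps)
  then have "cmod a * (dE p w * norm w) * cmod (herm x y) \<le> cmod c * norm x * cmod (herm x y)"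
    by (simp add: mult_right_mono)
  also have "\<dots> = cmod a * (cmod (herm y w) * norm x)" using ac by (simp add: algebra_simps)
  finally have "cmod a * (dE p w * norm w) * cmod (herm x y) \<le> cmod a * (cmod (herm y w) * norm x)" .
  then have "dE p w * (norm w * cmod (herm x y)) \<le> cmod (herm y w) * norm x"
    using \<open>a \<noteq> 0\<close> by (simp add: algebra_simps)
  moreover have "norm w > 0" "norm x > 0" "norm y > 0" "cmod (herm x y) > 0"
    using x xy qw by (auto simp: S3_def qform_expand)
  ultimately show ?thesis by (simp add: herm_ratio_def field_simps)
qed

lemma herm_ratio_le_dist_chain:
  assumes y: "y \<in> S3" and "chain w \<noteq> {}"
  shows "herm_ratio y w \<le> sqrt 2 * dist_chain y w"
proof -
  have "herm_ratio y w / sqrt 2 \<le> dvis y z" if "z \<in> chain w" for z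
  proof -
    have z: "z \<in> S3" "herm z w = 0" using that by (auto simp: chain_def)
    have "herm_ratio y w \<le> dE y z" using herm_ratio_le_dE[of z w y] z by (auto simp: S3_def)
    also have "\<dots> \<le> sqrt 2 * dvis y z" by (rule dE_le_sqrt2_dvis[OF y z(1)])
    finally show ?thesis by (simp add: field_simps)
  qed
  then have "herm_ratio y w / sqrt 2 \<le> dist_chain y w"
    unfolding dist_chain_def using assms(2) by (intro cINF_greatest) auto
  then show ?thesis by (simp add: field_simps)
qed

lemma herm_orth_proj:
  fixes w y :: "complex^3"
  assumes "qform w \<noteq> 0"
  defines "v \<equiv> y - (herm y w / herm w w) *s w"
  shows "herm v w = 0" and "herm y v = herm v v"
    and "qform v = qform y - (cmod (herm y w))^2 / qform w"
proof -
  define W where "W = herm w w"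
  have W: "W = complex_of_real (qform w)" "W \<noteq> 0" using assms(1) by (simp_all add: W_def herm_self)
  then have cnj_W: "cnj W = W" by simp
  show vw: "herm v w = 0" using W by (simp add: v_def W_def[symmetric])
  then have "herm w v = 0" using herm_commute[of w v] by simp
  then show yv: "herm y v = herm v v" by (simp add: v_def)
  have "herm y v = herm y y - cnj (herm y w) * herm y w / W"
    using cnj_W by (simp add: v_def W_def[symmetric] herm_commute[of w y] mult.commute)
  also have "\<dots> = complex_of_real (qform y - (cmod (herm y w))^2 / qform w)"
    unfolding of_real_diff of_real_divide complex_norm_square W(1) herm_self by (simp add: ac_simps)
  finally show "qform v = qform y - (cmod (herm y w))^2 / qform w"
    unfolding qform_def yv by simp
qed

lemma exists_chain_point:
  assumes x: "x \<in> S3" and y: "y \<in> S3" and qw: "qform w < 0"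
    and xw: "herm x w = 0" and xy: "herm x y \<noteq> 0"
  shows "\<exists>z\<in>chain w. herm y z = complex_of_real ((cmod (herm y w))^2 / - qform w / 2)
    \<and> herm z x = cnj (herm x y)"
proof -
  \<comment> \<open>\<open>v\<close> is the projection of \<open>y\<close> onto \<open>w\<^sup>\<perp>\<close>; then \<open>z = v + s x\<close> is pushed back onto the null cone.\<close>
  define v where "v = y - (herm y w / herm w w) *s w"
  define Q where "Q = (cmod (herm y w))^2 / - qform w"
  have vw: "herm v w = 0" and yv: "herm y v = herm v v" and "qform v = Q"
    using herm_orth_proj[of w y] qw y by (auto simp: v_def Q_def S3_def)
  then have vv: "herm v v = complex_of_real Q" by (simp add: herm_self)
  define g where "g = herm x y"
  have xv: "herm x v = g" using xw by (simp add: v_def g_def)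
  have vx: "herm v x = cnj g" using xv herm_commute[of v x] by simp
  define s where "s = - complex_of_real Q / (2 * g)"
  have sg: "s * g = - complex_of_real Q / 2" and cnj_sg: "cnj s * cnj g = - complex_of_real Q / 2"
    using xy by (simp_all add: s_def g_def)
  define z where "z = v + s *s x"
  have xx: "herm x x = 0" using S3_herm_self[OF x] .
  have zw: "herm z w = 0" using vw xw by (simp add: z_def)
  have zx: "herm z x = cnj g" using vx xx by (simp add: z_def)
  have "herm z z = herm v v + cnj s * herm v x + s * herm x v + s * cnj s * herm x x"
    by (simp add: z_def algebra_simps)
  also have "\<dots> = 0" using vv vx xv xx sg cnj_sg by simp
  finally have zz: "herm z z = 0" .
  have "herm y z = herm v v + cnj s * cnj g"
    using yv herm_commute[of y x] by (simp add: z_def g_def)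
  also have "\<dots> = complex_of_real (Q / 2)" using vv cnj_sg by simp
  finally have yz: "herm y z = complex_of_real (Q / 2)" .
  have "z \<noteq> 0" using zx xy by (auto simp: g_def)
  then have "z \<in> chain w" using zz zw by (simp add: chain_def S3_def qform_def)
  with yz zx show ?thesis unfolding Q_def[symmetric] g_def by blast
qed

lemma dist_chain_sq_le:
  assumes x: "x \<in> S3" and y: "y \<in> S3" and qw: "qform w < 0"
    and xc: "x \<in> chain w" and xy: "herm x y \<noteq> 0"
  shows "(dist_chain y w)^2 \<le> (herm_ratio y w)^2 / (2 * herm_ratio w w * herm_ratio x y)"
proof -
  define Q where "Q = (cmod (herm y w))^2 / (- qform w)"
  have xw: "herm x w = 0" using xc by (simp add: chain_def)
  obtain z where z: "z \<in> chain w" and yz: "herm y z = complex_of_real (Q / 2)"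
    and zx: "herm z x = cnj (herm x y)"
    using exists_chain_point[OF x y qw xw xy] by (auto simp: Q_def)
  have Q0: "0 \<le> Q" using qw by (simp add: Q_def divide_nonneg_neg)
  then have cmod_yz: "cmod (herm y z) = Q / 2" unfolding yz by simp
  have pos: "norm x > 0" "norm y > 0" "norm w > 0" "norm z > 0" "cmod (herm x y) > 0"
    using x y z qw xy by (auto simp: S3_def chain_def qform_expand)
  have "0 \<le> dist_chain y w"
    unfolding dist_chain_def using xc by (intro cINF_greatest) (auto simp: dvis_def)
  moreover have "dist_chain y w \<le> dvis y z"
    unfolding dist_chain_def using z by (intro cINF_lower bdd_belowI[of _ 0]) (auto simp: dvis_def)
  ultimately have "(dist_chain y w)^2 \<le> (dvis y z)^2" by (intro power_mono)
  also have "\<dots> = (Q / 2) / (norm y * norm z)"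
    using Q0 pos by (simp add: dvis_def cmod_yz)
  also have "\<dots> \<le> (Q / 2) / (norm y * (cmod (herm x y) / norm x))"
  proof (rule divide_left_mono)
    have "cmod (herm x y) \<le> norm z * norm x" using cmod_herm_le[of z x] zx by simp
    then show "norm y * (cmod (herm x y) / norm x) \<le> norm y * norm z"
      using pos by (intro mult_left_mono) (auto simp: field_simps)
  qed (use Q0 pos in auto)
  also have "\<dots> = (herm_ratio y w)^2 / (2 * herm_ratio w w * herm_ratio x y)"
    using pos qw by (simp add: Q_def herm_ratio_def herm_self field_simps power2_eq_square)
  finally show ?thesis .
qed

lemma comparable_from_bounds:
  fixes D E h g k C :: real
  assumes g: "0 < g" "g \<le> 1" and k: "0 < k" "k \<le> 1" and C: "2 / (g * k) \<le> C"
    and h: "0 \<le> h" and D_lower: "h \<le> sqrt 2 * D" and D_upper: "D^2 \<le> h^2 / (2 * k * g)"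
    and E_lower: "h \<le> E" and E_upper: "E \<le> h / g"
  shows "D / C \<le> E \<and> E \<le> C * D"
proof
  define t where "t = g * k"
  have t: "0 < t" "t \<le> 1" using g k by (auto simp: t_def mult_le_one)
  have Ct: "2 / t \<le> C" using C by (simp add: t_def)
  moreover have "0 < 2 / t" using t by simp
  ultimately have C0: "0 < C" by linarith
  have "D^2 \<le> h^2 / (2 * t)" using D_upper by (simp add: t_def ac_simps)
  also have "\<dots> \<le> (2 / t)^2 * h^2"
  proof -
    have "h * h * t \<le> h * h * 8" using t by (intro mult_left_mono) auto
    then show ?thesis using t by (simp add: field_simps power2_eq_square)
  qed
  also have "\<dots> \<le> (C * h)^2"
    using Ct t h by (simp add: power_mult_distrib mult_right_mono power_mono)
  finally have "D \<le> C * h" by (rule power2_le_imp_le) (use C0 h in simp)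
  also have "\<dots> \<le> C * E" using C0 E_lower by simp
  finally show "D / C \<le> E" using C0 by (simp add: divide_le_eq mult.commute)
  have "0 \<le> sqrt 2 * D" using h D_lower by linarith
  then have D0: "0 \<le> D" by (simp add: zero_le_mult_iff)
  have "sqrt 2 * k \<le> 2 * 1"
    using k by (intro mult_mono) (auto simp: real_le_lsqrt)
  then have "sqrt 2 / g \<le> 2 / t" using g k by (simp add: t_def field_simps)
  note E_upper
  also have "h / g \<le> sqrt 2 * D / g" using D_lower g by (simp add: divide_right_mono)
  also have "\<dots> = sqrt 2 / g * D" by simp
  also have "\<dots> \<le> 2 / t * D"
    using \<open>sqrt 2 / g \<le> 2 / t\<close> D0 by (rule mult_right_mono)
  also have "\<dots> \<le> C * D" using Ct D0 by (rule mult_right_mono)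
  finally show "E \<le> C * D" .
qed

lemma dist_chain_dE_comparable:
  assumes x: "x \<in> S3" and y: "y \<in> S3" and w: "w \<in> LC" and xc: "x \<in> chain w"
    and pi: "is_pi x y p"
    and c1: "0 < c1" "c1 \<le> herm_ratio x y" and c2: "0 < c2" "c2 \<le> herm_ratio w w"
    and C: "2 / (c1 * c2) \<le> C"
  shows "dist_chain y w / C \<le> dE p w \<and> dE p w \<le> C * dist_chain y w"
proof -
  have qw: "qform w < 0" using w by (simp add: LC_def)
  have wx: "herm w x = 0" using xc herm_commute[of w x] by (simp add: chain_def)
  have xy: "herm x y \<noteq> 0" using c1 herm_ratio_pos_iff by force
  have "2 / (herm_ratio x y * herm_ratio w w) \<le> 2 / (c1 * c2)"
    using c1 c2 by (intro divide_left_mono mult_mono) auto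
  with C have "2 / (herm_ratio x y * herm_ratio w w) \<le> C" by linarith
  from comparable_from_bounds[OF _ herm_ratio_le_1 _ herm_ratio_le_1 this herm_ratio_nonneg
      herm_ratio_le_dist_chain[OF y] dist_chain_sq_le[OF x y qw xc xy]
      herm_ratio_le_dE_pi[OF pi] dE_pi_le[OF x wx qw pi xy]]
  show ?thesis using c1 c2 xc by fastforce
qed

section \<open>Uniform constants by compactness\<close>

lemma compact_pos_lower_bound:
  fixes f :: "'a::topological_space \<Rightarrow> real"
  assumes "compact K" and "continuous_on K f" and "\<forall>p\<in>K. 0 < f p"
  shows "\<exists>c>0. \<forall>p\<in>K. c \<le> f p"
proof (cases "K = {}")
  case False
  then obtain p0 where "p0 \<in> K" "\<forall>p\<in>K. f p0 \<le> f p"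
    using continuous_attains_inf[OF assms(1) False assms(2)] by blast
  then show ?thesis using assms(3) by blast
qed (auto intro: exI[of _ 1])

lemma continuous_on_herm [continuous_intros]:
  "continuous_on S f \<Longrightarrow> continuous_on S g \<Longrightarrow> continuous_on S (\<lambda>p. herm (f p) (g p))"
  unfolding herm_def by (intro continuous_intros)

lemma continuous_on_herm_ratio [continuous_intros]:
  "continuous_on S f \<Longrightarrow> continuous_on S g \<Longrightarrow> (\<forall>p\<in>S. f p \<noteq> 0 \<and> g p \<noteq> 0) \<Longrightarrow>
    continuous_on S (\<lambda>p. herm_ratio (f p) (g p))"
  unfolding herm_ratio_def by (intro continuous_intros) auto

lemma herm_ratio_lower_bound:
  assumes "compact K1" and "compact K2" and "K1 \<subseteq> S3" and "K2 \<subseteq> S3"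
    and disj: "\<forall>x\<in>K1. \<forall>y\<in>K2. \<not> proj_eq x y"
  shows "\<exists>c>0. \<forall>x\<in>K1. \<forall>y\<in>K2. c \<le> herm_ratio x y"
proof -
  have "\<exists>c>0. \<forall>p\<in>K1 \<times> K2. c \<le> herm_ratio (fst p) (snd p)"
  proof (rule compact_pos_lower_bound)
    show "compact (K1 \<times> K2)" using assms by (simp add: compact_Times)
    show "continuous_on (K1 \<times> K2) (\<lambda>p. herm_ratio (fst p) (snd p))"
      using assms by (intro continuous_intros) (auto simp: S3_def)
    show "\<forall>p\<in>K1 \<times> K2. 0 < herm_ratio (fst p) (snd p)"
    proof
      fix p assume "p \<in> K1 \<times> K2"
      then obtain x y where p: "p = (x, y)" "x \<in> K1" "y \<in> K2" by blast
      then have "herm y x \<noteq> 0"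
        using orth_S3_imp_proj_eq[of x y] disj assms(3,4) by blast
      then show "0 < herm_ratio (fst p) (snd p)"
        using herm_commute[of y x] by (simp add: p herm_ratio_pos_iff)
    qed
  qed
  then show ?thesis by auto
qed

lemma herm_ratio_self_lower_bound:
  assumes "compact K1" and "compact K2" and S3: "K1 \<subseteq> S3" "K2 \<subseteq> S3"
    and disj: "\<forall>x\<in>K1. \<forall>y\<in>K2. \<not> proj_eq x y"
  shows "\<exists>c>0. \<forall>w\<in>LC. \<forall>x\<in>K1. \<forall>k\<in>K2. x \<in> chain w \<and> k \<in> chain w \<longrightarrow> c \<le> herm_ratio w w"
proof -
  define T where "T = (sphere 0 1 \<times> K1 \<times> K2)
    \<inter> {p. herm (fst (snd p)) (fst p) = 0} \<inter> {p. herm (snd (snd p)) (fst p) = 0}"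
  have "\<exists>c>0. \<forall>p\<in>T. c \<le> herm_ratio (fst p) (fst p)"
  proof (rule compact_pos_lower_bound)
    show "compact T" unfolding T_def
      using assms by (intro compact_Int_closed compact_Times closed_Collect_eq continuous_intros) auto
    show "continuous_on T (\<lambda>p. herm_ratio (fst p) (fst p))"
      by (intro continuous_intros) (auto simp: T_def)
    show "\<forall>p\<in>T. 0 < herm_ratio (fst p) (fst p)"
    proof
      fix p assume "p \<in> T"
      then obtain w x k where p: "p = (w, x, k)" and "norm w = 1" "x \<in> K1" "k \<in> K2"
        "herm x w = 0" "herm k w = 0"
        by (auto simp: T_def)
      have "herm w w \<noteq> 0"
      proof
        assume "herm w w = 0"
        then have "w \<in> S3" using \<open>norm w = 1\<close> by (auto simp: S3_def herm_self)
        then have "proj_eq x w" "proj_eq w k"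
          using orth_S3_imp_proj_eq S3 \<open>x \<in> K1\<close> \<open>k \<in> K2\<close> \<open>herm k w = 0\<close> \<open>herm x w = 0\<close>
            herm_commute[of x w] by auto
        then show False using proj_eq_trans disj \<open>x \<in> K1\<close> \<open>k \<in> K2\<close> by blast
      qed
      then show "0 < herm_ratio (fst p) (fst p)" by (simp add: p herm_ratio_pos_iff)
    qed
  qed
  then obtain c where c: "c > 0" "\<forall>p\<in>T. c \<le> herm_ratio (fst p) (fst p)" by blast
  have "c \<le> herm_ratio w w"
    if "w \<in> LC" "x \<in> K1" "k \<in> K2" "x \<in> chain w" "k \<in> chain w" for w x k
  proof -
    have "w \<noteq> 0" using that(1) by (auto simp: LC_def qform_expand)
    define u where "u = complex_of_real (1 / norm w) *s w"
    have "norm u = 1" using \<open>w \<noteq> 0\<close> by (simp add: u_def norm_scale_vec3 norm_divide)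
    then have "(u, x, k) \<in> T" using that by (simp add: T_def u_def chain_def)
    then show ?thesis using c \<open>w \<noteq> 0\<close> herm_ratio_scale_self[of "complex_of_real (1 / norm w)" w]
      by (force simp: u_def)
  qed
  with c show ?thesis by blast
qed

theorem lemma5p10:
  fixes K1 K2 :: "(complex^3) set"
  assumes "K1 \<noteq> {}" and "K2 \<noteq> {}"
    and "compact K1" and "compact K2"
    and "K1 \<subseteq> S3" and "K2 \<subseteq> S3"
    and "\<forall>x\<in>K1. \<forall>y\<in>K2. \<not> proj_eq x y"
  shows "\<exists>C::real. C \<ge> 1 \<and>
    (\<forall>x\<in>K1. \<forall>y\<in>K2. \<forall>w\<in>LC.
       x \<in> chain w \<and> (\<exists>k\<in>K2. k \<in> chain w) \<longrightarrow>
       (\<forall>p. is_pi x y p \<longrightarrow>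
          dist_chain y w / C \<le> dE p w \<and> dE p w \<le> C * dist_chain y w))"
proof -
  obtain c1 where c1: "c1 > 0" "\<forall>x\<in>K1. \<forall>y\<in>K2. c1 \<le> herm_ratio x y"
    using herm_ratio_lower_bound[OF assms(3-7)] by blast
  obtain c2 where c2: "c2 > 0"
    "\<forall>w\<in>LC. \<forall>x\<in>K1. \<forall>k\<in>K2. x \<in> chain w \<and> k \<in> chain w \<longrightarrow> c2 \<le> herm_ratio w w"
    using herm_ratio_self_lower_bound[OF assms(3-7)] by blast
  define C where "C = max 1 (2 / (c1 * c2))"
  have "dist_chain y w / C \<le> dE p w \<and> dE p w \<le> C * dist_chain y w"
    if "x \<in> K1" "y \<in> K2" "w \<in> LC" "x \<in> chain w" "k \<in> K2" "k \<in> chain w" "is_pi x y p"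
    for x y w k p
    by (rule dist_chain_dE_comparable[OF _ _ _ _ _ c1(1) _ c2(1)])
      (use that c1 c2 assms(5,6) in \<open>auto simp: C_def\<close>)
  then show ?thesis by (intro exI[of _ C]) (auto simp: C_def)
qed

end
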